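(* Let $T\ge1$, $n\ge 2$, $\mu\in\mathbb{R}$, $\sigma>0$, $z^*\in\mathbb{R}$, $\tau\in\{1,\dots,T\}$. Data consist of batches $D_1,\dots,D_T$ of $n$ real numbers $X_{t,1},\dots,X_{t,n}$. Under $\mathbf{H_0}$ all $nT$ numbers are i.i.d. $\mathcal{N}(\mu,\sigma^2)$; under $\mathbf{H_1^\tau}$ they are generated the same way and then the $J$-th entry of $D_\tau$ is replaced by $z^*$, with $J$ uniform on $\{1,\dots,n\}$ independent of the data. The observations are $\hat\mu_t=\frac{1}{nt}\sum_{j=1}^t\sum_{k=1}^nX_{j,k}$, $t=1,\dots,T$, and $\bar X_\tau=\frac1n\sum_{k=1}^nX_{\tau,k}=\tau\hat\mu_\tau-(\tau-1)\hat\mu_{\tau-1}$ (with $\hat\mu_0:=0$). Then the log of the ratio of the joint density of $(\hat\mu_1,\dots,\hat\mu_T)$ under $\mathbf{H_1^\tau}$ to that under $\mathbf{H_0}$ is \[ \log\mathrm{LR}_\tau=-\frac12\log\Big(\frac{n-1}{n}\Big)-\frac{n}{2(n-1)\sigma^2}(\bar X_\tau-\mu)^2+\frac{(z^*-\mu)n}{(n-1)\sigma^2}(\bar X_\tau-\mu)-\frac{(z^*-\mu)^2}{2(n-1)\sigma^2}. \] *)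

theory Defs
  imports "HOL-Probability.Probability"
begin

text \<open>Index set of the data: batch t in {1..T}, entry k in {1..n}.
  A data set is a function X :: nat \<times> nat \<Rightarrow> real (extensional on the index set).\<close>

definition data_idx :: "nat \<Rightarrow> nat \<Rightarrow> (nat \<times> nat) set" where
  "data_idx T n = {1..T} \<times> {1..n}"

definition data_space :: "nat \<Rightarrow> nat \<Rightarrow> (nat \<times> nat \<Rightarrow> real) measure" where
  "data_space T n = PiM (data_idx T n) (\<lambda>_. lborel)"

definition H0 :: "real \<Rightarrow> real \<Rightarrow> nat \<Rightarrow> nat \<Rightarrow> (nat \<times> nat \<Rightarrow> real) measure" where
  "H0 \<mu> \<sigma> T n = PiM (data_idx T n) (\<lambda>_. density lborel (normal_density \<mu> \<sigma>))"

definition H1 :: "real \<Rightarrow> real \<Rightarrow> nat \<Rightarrow> nat \<Rightarrow> nat \<Rightarrow> real \<Rightarrow> (nat \<times> nat \<Rightarrow> real) measure" where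
  "H1 \<mu> \<sigma> T n \<tau> zs =
     distr (H0 \<mu> \<sigma> T n \<Otimes>\<^sub>M uniform_count_measure {1..n}) (data_space T n)
       (\<lambda>(X, j). X((\<tau>, j) := zs))"

definition muhat :: "nat \<Rightarrow> (nat \<times> nat \<Rightarrow> real) \<Rightarrow> nat \<Rightarrow> real" where
  "muhat n X t = (\<Sum>j\<in>{1..t}. \<Sum>k\<in>{1..n}. X (j, k)) / (real n * real t)"

definition obs_space :: "nat \<Rightarrow> (nat \<Rightarrow> real) measure" where
  "obs_space T = PiM {1..T} (\<lambda>_. lborel)"

definition obs :: "nat \<Rightarrow> nat \<Rightarrow> (nat \<times> nat \<Rightarrow> real) \<Rightarrow> (nat \<Rightarrow> real)" where
  "obs T n X = (\<lambda>t\<in>{1..T}. muhat n X t)"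

definition xbar :: "nat \<Rightarrow> (nat \<Rightarrow> real) \<Rightarrow> real" where
  "xbar \<tau> m = real \<tau> * m \<tau> - (real \<tau> - 1) * (if \<tau> = 1 then 0 else m (\<tau> - 1))"

definition logLR :: "real \<Rightarrow> real \<Rightarrow> nat \<Rightarrow> real \<Rightarrow> real \<Rightarrow> real" where
  "logLR \<mu> \<sigma> n zs xb =
     - (1/2) * ln ((real n - 1) / real n)
     - real n / (2 * (real n - 1) * \<sigma>\<^sup>2) * (xb - \<mu>)\<^sup>2
     + (zs - \<mu>) * real n / ((real n - 1) * \<sigma>\<^sup>2) * (xb - \<mu>)
     - (zs - \<mu>)\<^sup>2 / (2 * (real n - 1) * \<sigma>\<^sup>2)"

end

theory Submission
  imports Defs
begin

(* Let b be the vector of batch means. The observations are the running means of b, and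
   xbar recovers b from them. Under H0 the batch means are i.i.d. N(mu, sigma^2/n). Under H1,
   conditionally on J = j, they are still independent, only batch tau being affected: it becomes
   N((z* + (n-1) mu)/n, (n-1) sigma^2/n^2). This law does not depend on j, so it is also the law
   after mixing over J. The two product laws differ in the tau-th factor only, whose density
   ratio is exp (logLR), so the H1 law has density exp (logLR (b tau)) with respect to the H0 law;
   pushing both forward along the running-means map gives the density exp (logLR (xbar tau m)). *)

section \<open>Product measures\<close>

lemma sum_singleton_Times: "(\<Sum>i\<in>{t} \<times> K. f i) = (\<Sum>k\<in>K. f (t, k))"
proof -
  have "{t} \<times> K = Pair t ` K"
    by auto
  then show ?thesis
    by (simp add: sum.reindex inj_on_def)
qed

lemma indicator_PiE_eq_prod:
  assumes "finite I" "x \<in> extensional I"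
  shows "indicator (PiE I A) x = (\<Prod>i\<in>I. indicator (A i) (x i) :: 'b :: comm_semiring_1)"
proof (cases "x \<in> PiE I A")
  case False
  then obtain i where "i \<in> I" "x i \<notin> A i"
    using assms(2) by (auto simp: PiE_def)
  then have "(\<Prod>i\<in>I. indicator (A i) (x i) :: 'b) = 0"
    using assms(1) by (intro prod_zero bexI[of _ i]) auto
  then show ?thesis
    using False by simp
qed (auto simp: PiE_def indicator_def intro!: prod.neutral)

lemma borel_measurable_sum_components:
  fixes M :: "'i \<Rightarrow> real measure"
  assumes "S \<subseteq> I" "\<And>i. i \<in> I \<Longrightarrow> sets (M i) = sets borel"
  shows "(\<lambda>x. \<Sum>i\<in>S. x i) \<in> borel_measurable (PiM I M)"
proof (rule borel_measurable_sum[where f="\<lambda>i x. x i"])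
  fix i assume "i \<in> S"
  then have "(\<lambda>x. x i) \<in> measurable (PiM I M) (M i)"
    using assms(1) by (intro measurable_component_singleton) auto
  then show "(\<lambda>x. x i) \<in> borel_measurable (PiM I M)"
    using assms \<open>i \<in> S\<close> by (subst measurable_cong_sets[OF refl, where N'="M i"]) auto
qed

lemma indep_vars_PiM_components:
  assumes M: "\<And>i. i \<in> I \<Longrightarrow> prob_space (M i)" and N: "\<And>i. i \<in> I \<Longrightarrow> sets (N i) = sets (M i)"
    and "I \<noteq> {}"
  shows "prob_space.indep_vars (PiM I M) N (\<lambda>i x. x i) I"
proof -
  interpret P: prob_space "PiM I M" using M by (rule prob_space_PiM)
  have rv: "(\<lambda>x. x i) \<in> measurable (PiM I M) (N i)" if "i \<in> I" for i
    using measurable_component_singleton[OF that, of M]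
    by (simp only: measurable_cong_sets[OF refl N[OF that]])
  have "distr (PiM I M) (PiM I N) (\<lambda>x. \<lambda>i\<in>I. x i) = distr (PiM I M) (PiM I M) (\<lambda>x. x)"
    using N by (intro distr_cong sets_PiM_cong) (auto simp: space_PiM)
  also have "\<dots> = PiM I M"
    by (rule distr_id)
  also have "\<dots> = PiM I (\<lambda>i. distr (PiM I M) (N i) (\<lambda>x. x i))"
  proof (rule PiM_cong[OF refl])
    fix i assume "i \<in> I"
    then have "distr (PiM I M) (N i) (\<lambda>x. x i) = distr (PiM I M) (M i) (\<lambda>x. x i)"
      using N by (intro distr_cong) auto
    also have "\<dots> = M i"
      using M \<open>i \<in> I\<close> by (rule distr_PiM_component)
    finally show "M i = distr (PiM I M) (N i) (\<lambda>x. x i)" ..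
  qed
  finally show ?thesis
    using P.indep_vars_iff_distr_eq_PiM'[OF \<open>I \<noteq> {}\<close> rv] by simp
qed

lemma distributed_affine_sum_components_normal:
  fixes a c \<mu> \<sigma> :: real
  assumes S: "finite S" "S \<noteq> {}" "S \<subseteq> J" and "c \<noteq> 0" "\<sigma> > 0"
  shows "distributed (PiM J (\<lambda>_. density lborel (normal_density \<mu> \<sigma>))) lborel
           (\<lambda>x. a + c * (\<Sum>i\<in>S. x i))
           (normal_density (a + c * (real (card S) * \<mu>)) (\<bar>c\<bar> * (sqrt (real (card S)) * \<sigma>)))"
proof -
  let ?N = "density lborel (normal_density \<mu> \<sigma>)"
  have N: "prob_space ?N"
    using \<open>\<sigma> > 0\<close> by (rule prob_space_normal_density)
  interpret P: prob_space "PiM J (\<lambda>_. ?N)"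
    using N by (rule prob_space_PiM)
  have "P.indep_vars (\<lambda>_. borel) (\<lambda>i x. x i) J"
    using N S by (intro indep_vars_PiM_components) auto
  then have ind: "P.indep_vars (\<lambda>_. borel) (\<lambda>i x. x i) S"
    using S(3) by (rule P.indep_vars_subset)
  have component: "distributed (PiM J (\<lambda>_. ?N)) lborel (\<lambda>x. x i) (normal_density \<mu> \<sigma>)"
    if "i \<in> J" for i
  proof -
    have "distr (PiM J (\<lambda>_. ?N)) lborel (\<lambda>x. x i) = distr (PiM J (\<lambda>_. ?N)) ?N (\<lambda>x. x i)"
      by (rule distr_cong) auto
    also have "\<dots> = ?N"
      using N that by (intro distr_PiM_component)
    finally have "distr (PiM J (\<lambda>_. ?N)) lborel (\<lambda>x. x i) = ?N" .
    with that show ?thesis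
      unfolding distributed_def by simp
  qed
  have "distributed (PiM J (\<lambda>_. ?N)) lborel (\<lambda>x. \<Sum>i\<in>S. x i)
          (normal_density (\<Sum>i\<in>S. \<mu>) (sqrt (\<Sum>i\<in>S. \<sigma>\<^sup>2)))"
    using S ind \<open>\<sigma> > 0\<close> component by (intro P.sum_indep_normal) auto
  then have "distributed (PiM J (\<lambda>_. ?N)) lborel (\<lambda>x. \<Sum>i\<in>S. x i)
          (normal_density (real (card S) * \<mu>) (sqrt (real (card S)) * \<sigma>))"
    using \<open>\<sigma> > 0\<close> by (simp add: real_sqrt_mult)
  moreover have "sqrt (real (card S)) * \<sigma> > 0"
    using S \<open>\<sigma> > 0\<close> by (simp add: card_gt_0_iff)
  ultimately show ?thesis
    using \<open>c \<noteq> 0\<close> by (rule P.normal_density_affine)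
qed

lemma distr_PiM_affine_block_sums_normal:
  fixes a c :: "'i \<Rightarrow> real" and \<mu> \<sigma> :: real and S :: "'i \<Rightarrow> 'j set"
  assumes I: "finite I" "I \<noteq> {}" and disjoint: "disjoint_family_on S I"
    and S: "\<And>t. t \<in> I \<Longrightarrow> finite (S t)" "\<And>t. t \<in> I \<Longrightarrow> S t \<noteq> {}" "\<And>t. t \<in> I \<Longrightarrow> S t \<subseteq> J"
    and "\<And>t. t \<in> I \<Longrightarrow> c t \<noteq> 0" and "\<sigma> > 0"
  shows "distr (PiM J (\<lambda>_. density lborel (normal_density \<mu> \<sigma>))) (PiM I (\<lambda>_. lborel))
           (\<lambda>x. \<lambda>t\<in>I. a t + c t * (\<Sum>i\<in>S t. x i))
       = PiM I (\<lambda>t. density lborel (normal_density (a t + c t * (real (card (S t)) * \<mu>))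
                                      (\<bar>c t\<bar> * (sqrt (real (card (S t))) * \<sigma>))))"
proof -
  let ?N = "density lborel (normal_density \<mu> \<sigma>)"
  define Y where "Y t x = a t + c t * (\<Sum>i\<in>S t. x i)" for t and x :: "'j \<Rightarrow> real"
  have N: "prob_space ?N"
    using \<open>\<sigma> > 0\<close> by (rule prob_space_normal_density)
  interpret P: prob_space "PiM J (\<lambda>_. ?N)"
    using N by (rule prob_space_PiM)
  have "J \<noteq> {}"
    using I S by blast
  then have "P.indep_vars (\<lambda>_. lborel) (\<lambda>i x. x i) J"
    using N by (intro indep_vars_PiM_components) auto
  then have "P.indep_vars (\<lambda>t. PiM (S t) (\<lambda>_. lborel)) (\<lambda>t x. restrict x (S t)) I"
    using P.indep_vars_restrict[OF _ S(3) disjoint] by simp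
  then have "P.indep_vars (\<lambda>_. lborel) (\<lambda>t x. Y t (restrict x (S t))) I"
    by (rule P.indep_vars_compose2)
       (auto simp: Y_def
         intro!: borel_measurable_add borel_measurable_times borel_measurable_sum_components)
  then have ind: "P.indep_vars (\<lambda>_. lborel) Y I"
    by (rule P.indep_vars_cong[THEN iffD1, rotated -1]) (auto simp: Y_def)
  have Y: "distributed (PiM J (\<lambda>_. ?N)) lborel (Y t)
             (normal_density (a t + c t * (real (card (S t)) * \<mu>))
                             (\<bar>c t\<bar> * (sqrt (real (card (S t))) * \<sigma>)))"
    if "t \<in> I" for t
    unfolding Y_def[abs_def] using that assms
    by (intro distributed_affine_sum_components_normal) auto
  have "distr (PiM J (\<lambda>_. ?N)) (PiM I (\<lambda>_. lborel)) (\<lambda>x. \<lambda>t\<in>I. Y t x)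
      = PiM I (\<lambda>t. distr (PiM J (\<lambda>_. ?N)) lborel (Y t))"
    using Y ind
    by (intro P.indep_vars_iff_distr_eq_PiM'[THEN iffD1, OF I(2)]) (auto simp: distributed_def)
  also have "\<dots> = PiM I (\<lambda>t. density lborel (normal_density (a t + c t * (real (card (S t)) * \<mu>))
                                      (\<bar>c t\<bar> * (sqrt (real (card (S t))) * \<sigma>))))"
    using Y by (intro PiM_cong) (auto simp: distributed_def)
  finally show ?thesis
    by (simp add: Y_def)
qed

lemma PiM_density:
  fixes f :: "'i \<Rightarrow> 'a \<Rightarrow> ennreal"
  assumes I: "finite I" and "\<And>i. sigma_finite_measure (M i)"
    and "\<And>i. sigma_finite_measure (density (M i) (f i))"
    and f: "\<And>i. i \<in> I \<Longrightarrow> f i \<in> borel_measurable (M i)"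
  shows "PiM I (\<lambda>i. density (M i) (f i)) = density (PiM I M) (\<lambda>x. \<Prod>i\<in>I. f i (x i))"
proof -
  interpret M: product_sigma_finite M
    using assms(2) by (simp add: product_sigma_finite_def)
  interpret Mf: product_sigma_finite "\<lambda>i. density (M i) (f i)"
    using assms(3) by (simp add: product_sigma_finite_def)
  have "density (PiM I M) (\<lambda>x. \<Prod>i\<in>I. f i (x i)) = PiM I (\<lambda>i. density (M i) (f i))"
  proof (rule Mf.PiM_eqI[OF I])
    show "sets (density (PiM I M) (\<lambda>x. \<Prod>i\<in>I. f i (x i))) = sets (PiM I (\<lambda>i. density (M i) (f i)))"
      by (simp cong: sets_PiM_cong)
    fix A assume "\<And>i. i \<in> I \<Longrightarrow> A i \<in> sets (density (M i) (f i))"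
    then have A: "\<And>i. i \<in> I \<Longrightarrow> A i \<in> sets (M i)"
      by simp
    have "emeasure (density (PiM I M) (\<lambda>x. \<Prod>i\<in>I. f i (x i))) (PiE I A)
        = (\<integral>\<^sup>+x. (\<Prod>i\<in>I. f i (x i)) * indicator (PiE I A) x \<partial>PiM I M)"
      using I A f by (intro emeasure_density sets_PiM_I_finite) auto
    also have "\<dots> = (\<integral>\<^sup>+x. (\<Prod>i\<in>I. f i (x i) * indicator (A i) (x i)) \<partial>PiM I M)"
    proof (rule nn_integral_cong)
      fix x assume "x \<in> space (PiM I M)"
      then have "x \<in> extensional I"
        by (simp add: space_PiM PiE_iff)
      then show "(\<Prod>i\<in>I. f i (x i)) * indicator (PiE I A) x
          = (\<Prod>i\<in>I. f i (x i) * indicator (A i) (x i))"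
        using I by (simp add: indicator_PiE_eq_prod prod.distrib)
    qed
    also have "\<dots> = (\<Prod>i\<in>I. \<integral>\<^sup>+x. f i x * indicator (A i) x \<partial>M i)"
      using I A f by (intro M.product_nn_integral_prod) auto
    also have "\<dots> = (\<Prod>i\<in>I. emeasure (density (M i) (f i)) (A i))"
      using A f by (intro prod.cong) (auto simp: emeasure_density)
    finally show "emeasure (density (PiM I M) (\<lambda>x. \<Prod>i\<in>I. f i (x i))) (PiE I A)
        = (\<Prod>i\<in>I. emeasure (density (M i) (f i)) (A i))" .
  qed
  then show ?thesis ..
qed

lemma PiM_density_single_factor:
  assumes I: "finite I" "\<tau> \<in> I" and "prob_space N" "prob_space (density N f)"
    and f: "f \<in> borel_measurable N"
  shows "PiM I (\<lambda>i. if i = \<tau> then density N f else N) = density (PiM I (\<lambda>_. N)) (\<lambda>x. f (x \<tau>))"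
proof -
  define g where "g i y = (if i = \<tau> then f y else 1)" for i y
  have "PiM I (\<lambda>i. if i = \<tau> then density N f else N) = PiM I (\<lambda>i. density N (g i))"
    by (intro PiM_cong) (auto simp: g_def[abs_def] density_1)
  also have "\<dots> = density (PiM I (\<lambda>_. N)) (\<lambda>x. \<Prod>i\<in>I. g i (x i))"
  proof (rule PiM_density)
    show "sigma_finite_measure (density N (g i))" for i
      using assms
      by (cases "i = \<tau>") (auto simp: g_def[abs_def] density_1 prob_space_imp_sigma_finite)
  qed (use assms in \<open>auto simp: g_def[abs_def] prob_space_imp_sigma_finite\<close>)
  also have "\<dots> = density (PiM I (\<lambda>_. N)) (\<lambda>x. f (x \<tau>))"
    using I by (simp add: g_def prod.delta)
  finally show ?thesis .
qed

lemma distr_pair_measure_constant_sections: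
  assumes "sigma_finite_measure M" "prob_space U" and F: "case_prod F \<in> measurable (M \<Otimes>\<^sub>M U) N"
    and sections: "\<And>y. y \<in> space U \<Longrightarrow> distr M N (\<lambda>x. F x y) = Q" and "sets Q = sets N"
  shows "distr (M \<Otimes>\<^sub>M U) N (case_prod F) = Q"
proof (rule measure_eqI)
  interpret U: prob_space U by fact
  interpret pair_sigma_finite M U
    by (simp add: pair_sigma_finite_def assms(1) U.sigma_finite_measure_axioms)
  show "sets (distr (M \<Otimes>\<^sub>M U) N (case_prod F)) = sets Q"
    using \<open>sets Q = sets N\<close> by simp
  fix A assume "A \<in> sets (distr (M \<Otimes>\<^sub>M U) N (case_prod F))"
  then have A: "A \<in> sets N" by simp
  let ?B = "case_prod F -` A \<inter> space (M \<Otimes>\<^sub>M U)"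
  have "emeasure (distr (M \<Otimes>\<^sub>M U) N (case_prod F)) A = emeasure (M \<Otimes>\<^sub>M U) ?B"
    using A F by (simp add: emeasure_distr)
  also have "\<dots> = (\<integral>\<^sup>+y. emeasure M ((\<lambda>x. (x, y)) -` ?B) \<partial>U)"
    using A F by (intro emeasure_pair_measure_alt2 measurable_sets)
  also have "\<dots> = (\<integral>\<^sup>+y. emeasure Q A \<partial>U)"
  proof (rule nn_integral_cong)
    fix y assume y: "y \<in> space U"
    then have "(\<lambda>x. (x, y)) -` ?B = (\<lambda>x. F x y) -` A \<inter> space M"
      by (auto simp: space_pair_measure)
    moreover have "(\<lambda>x. F x y) \<in> measurable M N"
      using F y by measurable
    ultimately show "emeasure M ((\<lambda>x. (x, y)) -` ?B) = emeasure Q A"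
      using A by (simp add: emeasure_distr flip: sections[OF y])
  qed
  also have "\<dots> = emeasure Q A"
    by (simp add: U.emeasure_space_1)
  finally show "emeasure (distr (M \<Otimes>\<^sub>M U) N (case_prod F)) A = emeasure Q A" .
qed

section \<open>The Gaussian likelihood ratio\<close>

abbreviation clean_batch_law :: "real \<Rightarrow> real \<Rightarrow> nat \<Rightarrow> real measure" where
  "clean_batch_law \<mu> \<sigma> n \<equiv> density lborel (normal_density \<mu> (\<sigma> / sqrt n))"

abbreviation contaminated_batch_law :: "real \<Rightarrow> real \<Rightarrow> nat \<Rightarrow> real \<Rightarrow> real measure" where
  "contaminated_batch_law \<mu> \<sigma> n zs \<equiv>
     density lborel (normal_density ((zs + (real n - 1) * \<mu>) / n) (sqrt (real n - 1) * \<sigma> / n))"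

lemma normal_density_mult_exp_logLR:
  fixes \<mu> \<sigma> zs x :: real
  assumes "n \<ge> 2" "\<sigma> > 0"
  shows "normal_density \<mu> (\<sigma> / sqrt n) x * exp (logLR \<mu> \<sigma> n zs x)
       = normal_density ((zs + (real n - 1) * \<mu>) / n) (sqrt (real n - 1) * \<sigma> / n) x"
proof -
  define r where "r = real n"
  have r: "r \<ge> 2"
    using assms(1) by (simp add: r_def)
  define q where "q = (r - 1) / r"
  have q: "q > 0"
    using r by (simp add: q_def)
  define B where "B = - (x - \<mu>)\<^sup>2 / (2 * (\<sigma> / sqrt r)\<^sup>2)
     - r / (2 * (r - 1) * \<sigma>\<^sup>2) * (x - \<mu>)\<^sup>2 + (zs - \<mu>) * r / ((r - 1) * \<sigma>\<^sup>2) * (x - \<mu>)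
     - (zs - \<mu>)\<^sup>2 / (2 * (r - 1) * \<sigma>\<^sup>2)"
  have exp_product: "exp (- (x - \<mu>)\<^sup>2 / (2 * (\<sigma> / sqrt r)\<^sup>2)) * exp (logLR \<mu> \<sigma> n zs x)
      = exp (- (1/2) * ln q) * exp B"
    by (simp only: exp_add[symmetric]) (simp add: logLR_def B_def r_def q_def algebra_simps)
  have exp_ln: "exp (- (1/2) * ln q) = 1 / sqrt q"
    using q by (simp add: ln_sqrt[symmetric] exp_minus inverse_eq_divide)
  \<comment> \<open>completing the square: both sides equal \<open>-(r (x - \<mu>) - (zs - \<mu>))\<^sup>2 / (2 (r - 1) \<sigma>\<^sup>2)\<close>\<close>
  have exponent: "B = - (x - (zs + (r - 1) * \<mu>) / r)\<^sup>2 / (2 * (sqrt (r - 1) * \<sigma> / r)\<^sup>2)"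
  proof -
    have "(\<sigma> / sqrt r)\<^sup>2 = \<sigma>\<^sup>2 / r" "(sqrt (r - 1) * \<sigma> / r)\<^sup>2 = (r - 1) * \<sigma>\<^sup>2 / r\<^sup>2"
      using r by (simp_all add: power_divide power_mult_distrib)
    then show ?thesis
      using r assms(2) unfolding B_def
      by (simp add: divide_simps) (simp add: power2_eq_square algebra_simps)
  qed
  have scale: "sqrt (2 * pi * (\<sigma> / sqrt r)\<^sup>2) * sqrt q = sqrt (2 * pi * (sqrt (r - 1) * \<sigma> / r)\<^sup>2)"
    using r
    by (simp add: q_def real_sqrt_mult[symmetric] power_divide power_mult_distrib
        field_simps power2_eq_square)
  have "normal_density \<mu> (\<sigma> / sqrt r) x * exp (logLR \<mu> \<sigma> n zs x)
      = 1 / sqrt (2 * pi * (\<sigma> / sqrt r)\<^sup>2) * (1 / sqrt q * exp B)"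
    unfolding normal_density_def mult.assoc exp_product exp_ln ..
  also have "\<dots> = 1 / sqrt (2 * pi * (sqrt (r - 1) * \<sigma> / r)\<^sup>2) * exp B"
    unfolding scale[symmetric] by simp
  also have "\<dots> = normal_density ((zs + (r - 1) * \<mu>) / r) (sqrt (r - 1) * \<sigma> / r) x"
    unfolding normal_density_def exponent ..
  finally show ?thesis
    unfolding r_def .
qed

lemma borel_measurable_logLR [measurable]: "logLR \<mu> \<sigma> n zs \<in> borel_measurable borel"
  unfolding logLR_def by measurable

lemma density_normal_exp_logLR:
  assumes "n \<ge> 2" "\<sigma> > 0"
  shows "density (clean_batch_law \<mu> \<sigma> n) (\<lambda>y. exp (logLR \<mu> \<sigma> n zs y))
       = contaminated_batch_law \<mu> \<sigma> n zs"
proof -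
  have "density (clean_batch_law \<mu> \<sigma> n) (\<lambda>y. exp (logLR \<mu> \<sigma> n zs y))
      = density lborel (\<lambda>y. ennreal (normal_density \<mu> (\<sigma> / sqrt n) y) * exp (logLR \<mu> \<sigma> n zs y))"
    by (intro density_density_eq) auto
  also have "\<dots> = contaminated_batch_law \<mu> \<sigma> n zs"
    using assms by (simp add: ennreal_mult[symmetric] normal_density_mult_exp_logLR)
  finally show ?thesis .
qed

section \<open>Batch means and running means\<close>

definition running_means :: "nat \<Rightarrow> (nat \<Rightarrow> real) \<Rightarrow> (nat \<Rightarrow> real)" where
  "running_means T b = (\<lambda>t\<in>{1..T}. (\<Sum>j\<in>{1..t}. b j) / real t)"

definition batch_means :: "nat \<Rightarrow> nat \<Rightarrow> (nat \<times> nat \<Rightarrow> real) \<Rightarrow> (nat \<Rightarrow> real)" where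
  "batch_means T n X = (\<lambda>t\<in>{1..T}. (\<Sum>k\<in>{1..n}. X (t, k)) / real n)"

lemma obs_eq_running_means_batch_means: "obs T n = running_means T \<circ> batch_means T n"
  unfolding obs_def running_means_def batch_means_def muhat_def
  by (intro ext restrict_ext) (simp add: sum_divide_distrib[symmetric])

lemma xbar_running_means:
  assumes "\<tau> \<in> {1..T}"
  shows "xbar \<tau> (running_means T b) = b \<tau>"
proof (cases \<tau>)
  case (Suc m)
  then show ?thesis
    using assms by (cases m) (auto simp: xbar_def running_means_def)
qed (use assms in simp)

lemma measurable_running_means: "running_means T \<in> measurable (obs_space T) (obs_space T)"
  unfolding running_means_def obs_space_def
  by (intro measurable_restrict borel_measurable_divide borel_measurable_const
        borel_measurable_sum_components[simplified measurable_lborel1]) auto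

lemma borel_measurable_xbar:
  assumes "\<tau> \<in> {1..T}"
  shows "xbar \<tau> \<in> borel_measurable (obs_space T)"
proof -
  have component: "(\<lambda>m. m t) \<in> borel_measurable (obs_space T)" if "t \<in> {1..T}" for t
    using measurable_component_singleton[OF that, of "\<lambda>_. lborel"] by (simp add: obs_space_def)
  show ?thesis
  proof (cases "\<tau> = 1")
    case False
    with assms have "\<tau> - 1 \<in> {1..T}"
      by auto
    with assms False show ?thesis
      unfolding xbar_def[abs_def]
      by (simp, intro borel_measurable_diff borel_measurable_times borel_measurable_const component) auto
  qed (use assms component in \<open>simp add: xbar_def[abs_def]\<close>)
qed

lemma measurable_batch_means: "batch_means T n \<in> measurable (data_space T n) (obs_space T)"
proof -
  have "batch_means T n = (\<lambda>X. \<lambda>t\<in>{1..T}. (\<Sum>i\<in>{t} \<times> {1..n}. X i) / n)"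
    by (simp add: batch_means_def sum_singleton_Times fun_eq_iff)
  then show ?thesis
    unfolding data_space_def obs_space_def
    by (auto simp: data_idx_def intro!: measurable_restrict borel_measurable_divide
        borel_measurable_sum_components[simplified measurable_lborel1])
qed

lemma sets_H0: "sets (H0 \<mu> \<sigma> T n) = sets (data_space T n)"
  unfolding H0_def data_space_def by (rule sets_PiM_cong) auto

lemma sets_H1: "sets (H1 \<mu> \<sigma> T n \<tau> zs) = sets (data_space T n)"
  by (simp add: H1_def)

lemma measurable_replace_entry:
  assumes "\<tau> \<in> {1..T}" and M: "sets M = sets (data_space T n)"
  shows "(\<lambda>(X, j). X((\<tau>, j) := zs))
           \<in> measurable (M \<Otimes>\<^sub>M uniform_count_measure {1..n}) (data_space T n)"
proof -
  let ?P = "M \<Otimes>\<^sub>M uniform_count_measure {1..n}"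
  have "(\<lambda>p. (fst p)((\<tau>, j) := zs)) \<in> measurable ?P (data_space T n)" if "j \<in> {1..n}" for j
    unfolding data_space_def
  proof (rule measurable_fun_upd[where J="data_idx T n"])
    show "data_idx T n = data_idx T n \<union> {(\<tau>, j)}"
      using assms(1) that by (auto simp: data_idx_def)
    show "fst \<in> measurable ?P (PiM (data_idx T n) (\<lambda>_. lborel))"
      using measurable_fst[of M "uniform_count_measure {1..n}"]
      unfolding measurable_cong_sets[OF refl M] data_space_def .
  qed simp
  moreover have "snd \<in> measurable ?P (count_space {1..n})"
    using measurable_snd[of M "uniform_count_measure {1..n}"]
    unfolding measurable_cong_sets[OF refl sets_uniform_count_measure_count_space] .
  ultimately have "(\<lambda>p. (fst p)((\<tau>, snd p) := zs)) \<in> measurable ?P (data_space T n)"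
    by (rule measurable_compose_countable') auto
  then show ?thesis
    by (simp add: split_beta)
qed

lemma distr_obs_via_batch_means:
  assumes "sets M = sets (data_space T n)"
  shows "distr M (obs_space T) (obs T n)
       = distr (distr M (obs_space T) (batch_means T n)) (obs_space T) (running_means T)"
proof -
  have "batch_means T n \<in> measurable M (obs_space T)"
    using measurable_batch_means by (simp add: measurable_cong_sets[OF assms refl])
  then show ?thesis
    unfolding obs_eq_running_means_batch_means
    by (rule distr_distr[OF measurable_running_means, symmetric])
qed

lemma distr_H0_partial_batch_sums:
  fixes a :: "nat \<Rightarrow> real" and K :: "nat \<Rightarrow> nat set"
  assumes "T \<ge> 1" "n \<ge> 1" "\<sigma> > 0"
    and K: "\<And>t. t \<in> {1..T} \<Longrightarrow> K t \<subseteq> {1..n}" "\<And>t. t \<in> {1..T} \<Longrightarrow> K t \<noteq> {}"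
  shows "distr (H0 \<mu> \<sigma> T n) (obs_space T) (\<lambda>X. \<lambda>t\<in>{1..T}. a t + (\<Sum>k\<in>K t. X (t, k)) / n)
       = PiM {1..T} (\<lambda>t. density lborel
           (normal_density (a t + real (card (K t)) * \<mu> / n) (sqrt (real (card (K t))) * \<sigma> / n)))"
proof -
  have finite_K: "finite (K t)" if "t \<in> {1..T}" for t
    using K(1)[OF that] finite_subset by blast
  have row_sums: "(\<lambda>X. \<lambda>t\<in>{1..T}. a t + (\<Sum>k\<in>K t. X (t, k)) / n)
      = (\<lambda>X. \<lambda>t\<in>{1..T}. a t + 1 / n * (\<Sum>i\<in>{t} \<times> K t. X i))"
    by (simp add: sum_singleton_Times)
  then have "distr (H0 \<mu> \<sigma> T n) (obs_space T) (\<lambda>X. \<lambda>t\<in>{1..T}. a t + (\<Sum>k\<in>K t. X (t, k)) / n)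
      = PiM {1..T} (\<lambda>t. density lborel (normal_density (a t + 1 / n * (real (card ({t} \<times> K t)) * \<mu>))
                                   (\<bar>1 / n\<bar> * (sqrt (real (card ({t} \<times> K t))) * \<sigma>))))"
    unfolding H0_def obs_space_def row_sums using assms finite_K
    by (intro distr_PiM_affine_block_sums_normal) (auto simp: disjoint_family_on_def data_idx_def)
  also have "\<dots> = PiM {1..T} (\<lambda>t. density lborel
           (normal_density (a t + real (card (K t)) * \<mu> / n) (sqrt (real (card (K t))) * \<sigma> / n)))"
    by (simp add: card_cartesian_product_singleton)
  finally show ?thesis .
qed

lemma sqrt_mult_divide_self:
  fixes x :: real
  assumes "x \<ge> 0"
  shows "sqrt x * y / x = y / sqrt x"
  using assms by (cases "x = 0") (auto simp: field_simps real_div_sqrt)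

lemma distr_H0_batch_means:
  assumes "T \<ge> 1" "n \<ge> 1" "\<sigma> > 0"
  shows "distr (H0 \<mu> \<sigma> T n) (obs_space T) (batch_means T n)
       = PiM {1..T} (\<lambda>_. clean_batch_law \<mu> \<sigma> n)"
proof -
  have "batch_means T n = (\<lambda>X. \<lambda>t\<in>{1..T}. 0 + (\<Sum>k\<in>{1..n}. X (t, k)) / n)"
    by (simp add: batch_means_def fun_eq_iff)
  with assms show ?thesis
    using distr_H0_partial_batch_sums[where a="\<lambda>_. 0" and K="\<lambda>_. {1..n}"]
    by (simp add: sqrt_mult_divide_self)
qed

lemma distr_H0_replaced_batch_means:
  assumes "n \<ge> 2" "\<sigma> > 0" "\<tau> \<in> {1..T}" "j \<in> {1..n}"
  shows "distr (H0 \<mu> \<sigma> T n) (obs_space T) (\<lambda>X. batch_means T n (X((\<tau>, j) := zs)))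
       = PiM {1..T} (\<lambda>t. if t = \<tau> then contaminated_batch_law \<mu> \<sigma> n zs else clean_batch_law \<mu> \<sigma> n)"
proof -
  define a where "a t = (if t = \<tau> then zs / n else 0)" for t
  define K where "K t = (if t = \<tau> then {1..n} - {j} else {1..n})" for t
  have "(\<Sum>k\<in>{1..n}. (X((\<tau>, j) := zs)) (\<tau>, k)) = zs + (\<Sum>k\<in>{1..n} - {j}. X (\<tau>, k))" for X
    using assms(4) by (simp add: sum.remove)
  then have "(\<lambda>X. batch_means T n (X((\<tau>, j) := zs)))
      = (\<lambda>X. \<lambda>t\<in>{1..T}. a t + (\<Sum>k\<in>K t. X (t, k)) / n)"
    by (auto simp: batch_means_def a_def K_def add_divide_distrib fun_eq_iff)
  then have "distr (H0 \<mu> \<sigma> T n) (obs_space T) (\<lambda>X. batch_means T n (X((\<tau>, j) := zs)))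
      = distr (H0 \<mu> \<sigma> T n) (obs_space T) (\<lambda>X. \<lambda>t\<in>{1..T}. a t + (\<Sum>k\<in>K t. X (t, k)) / n)"
    by simp
  also have "\<dots>
      = PiM {1..T} (\<lambda>t. density lborel
           (normal_density (a t + real (card (K t)) * \<mu> / n) (sqrt (real (card (K t))) * \<sigma> / n)))"
  proof (rule distr_H0_partial_batch_sums)
    have "card ({1..n} - {j}) \<noteq> 0"
      using assms by simp
    then show "K t \<noteq> {}" for t
      by (auto simp: K_def)
  qed (use assms in \<open>auto simp: K_def\<close>)
  also have "\<dots>
      = PiM {1..T} (\<lambda>t. if t = \<tau> then contaminated_batch_law \<mu> \<sigma> n zs else clean_batch_law \<mu> \<sigma> n)"
    using assms
    by (intro PiM_cong) (auto simp: a_def K_def sqrt_mult_divide_self add_divide_distrib of_nat_diff)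
  finally show ?thesis .
qed

lemma distr_H1_batch_means:
  assumes "n \<ge> 2" "\<sigma> > 0" "\<tau> \<in> {1..T}"
  shows "distr (H1 \<mu> \<sigma> T n \<tau> zs) (obs_space T) (batch_means T n)
       = PiM {1..T} (\<lambda>t. if t = \<tau> then contaminated_batch_law \<mu> \<sigma> n zs else clean_batch_law \<mu> \<sigma> n)"
proof -
  let ?U = "uniform_count_measure {1..n}"
  have replace: "(\<lambda>(X, j). X((\<tau>, j) := zs)) \<in> measurable (H0 \<mu> \<sigma> T n \<Otimes>\<^sub>M ?U) (data_space T n)"
    using assms(3) sets_H0 by (rule measurable_replace_entry)
  have "distr (H1 \<mu> \<sigma> T n \<tau> zs) (obs_space T) (batch_means T n)
      = distr (H0 \<mu> \<sigma> T n \<Otimes>\<^sub>M ?U) (obs_space T) (\<lambda>(X, j). batch_means T n (X((\<tau>, j) := zs)))"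
    unfolding H1_def using replace measurable_batch_means
    by (simp add: distr_distr comp_def case_prod_beta')
  also have "\<dots>
      = PiM {1..T} (\<lambda>t. if t = \<tau> then contaminated_batch_law \<mu> \<sigma> n zs else clean_batch_law \<mu> \<sigma> n)"
  proof (rule distr_pair_measure_constant_sections)
    show "sigma_finite_measure (H0 \<mu> \<sigma> T n)"
      using assms(2) unfolding H0_def
      by (intro prob_space_imp_sigma_finite prob_space_PiM prob_space_normal_density)
    show "prob_space ?U"
      using assms(1) by (intro prob_space_uniform_count_measure) auto
    show "(\<lambda>(X, j). batch_means T n (X((\<tau>, j) := zs)))
        \<in> measurable (H0 \<mu> \<sigma> T n \<Otimes>\<^sub>M ?U) (obs_space T)"
      using replace measurable_batch_means by (auto simp: case_prod_beta')
    show "distr (H0 \<mu> \<sigma> T n) (obs_space T) (\<lambda>X. batch_means T n (X((\<tau>, j) := zs)))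
        = PiM {1..T} (\<lambda>t. if t = \<tau> then contaminated_batch_law \<mu> \<sigma> n zs else clean_batch_law \<mu> \<sigma> n)"
      if "j \<in> space ?U" for j
      using assms that
      by (intro distr_H0_replaced_batch_means) (auto simp: space_uniform_count_measure)
  qed (unfold obs_space_def, rule sets_PiM_cong, auto)
  finally show ?thesis .
qed

theorem theorem3p4:
  fixes T n \<tau> :: nat and \<mu> \<sigma> zs :: real
  assumes "T \<ge> 1" and "n \<ge> 2" and "\<sigma> > 0" and "\<tau> \<in> {1..T}"
  shows "distr (H1 \<mu> \<sigma> T n \<tau> zs) (obs_space T) (obs T n)
       = density (distr (H0 \<mu> \<sigma> T n) (obs_space T) (obs T n))
           (\<lambda>m. ennreal (exp (logLR \<mu> \<sigma> n zs (xbar \<tau> m))))"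
proof -
  let ?N0 = "clean_batch_law \<mu> \<sigma> n"
  let ?l = "\<lambda>y. ennreal (exp (logLR \<mu> \<sigma> n zs y))"
  have laws: "prob_space ?N0" "prob_space (density ?N0 ?l)"
    using assms by (simp_all add: density_normal_exp_logLR prob_space_normal_density)
  have sets_N0: "sets (PiM {1..T} (\<lambda>_. ?N0)) = sets (obs_space T)"
    unfolding obs_space_def by (rule sets_PiM_cong) auto
  have "distr (H1 \<mu> \<sigma> T n \<tau> zs) (obs_space T) (obs T n)
      = distr (PiM {1..T} (\<lambda>t. if t = \<tau> then density ?N0 ?l else ?N0))
          (obs_space T) (running_means T)"
    unfolding density_normal_exp_logLR[OF assms(2,3)]
    using assms by (simp add: sets_H1 distr_obs_via_batch_means distr_H1_batch_means)
  also have "\<dots> = distr (density (PiM {1..T} (\<lambda>_. ?N0)) (\<lambda>b. ?l (xbar \<tau> (running_means T b))))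
                    (obs_space T) (running_means T)"
    using assms laws by (simp add: PiM_density_single_factor xbar_running_means)
  also have "\<dots> = density (distr (PiM {1..T} (\<lambda>_. ?N0)) (obs_space T) (running_means T))
                      (\<lambda>m. ?l (xbar \<tau> m))"
  proof (rule density_distr[symmetric])
    show "running_means T \<in> measurable (PiM {1..T} (\<lambda>_. ?N0)) (obs_space T)"
      unfolding measurable_cong_sets[OF sets_N0 refl] by (rule measurable_running_means)
  qed (use assms(4) borel_measurable_xbar in measurable)
  also have "\<dots> = density (distr (H0 \<mu> \<sigma> T n) (obs_space T) (obs T n)) (\<lambda>m. ?l (xbar \<tau> m))"
    using assms by (simp add: distr_obs_via_batch_means sets_H0 distr_H0_batch_means)
  finally show ?thesis .
qed

end
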